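(* Let $G=(V,E)$ be a finite, simple, connected graph with $|V|\geq 3$, and let $d\in \mathrm{Der}(\mathcal{A}(G))$. If $\Gamma_3(G)=\emptyset$, i.e. $G$ has no twin class with at least three vertices, then $d=0$.
   Context: Throughout, $\mathbb{K}$ is a field of characteristic $0$. A graph $G=(V,E)$ has vertex set $V=\{1,\dots,n\}$ and is assumed finite, simple (no loops, no multiple edges) and connected. $\mathcal{N}(i)$ denotes the set of neighbors of vertex $i$, $\deg(i)=|\mathcal{N}(i)|$, and $(a_{ij})$ is the adjacency matrix ($a_{ij}=1$ if $i,j$ are adjacent, $0$ otherwise). The evolution algebra $\mathcal{A}(G)$ is the $\mathbb{K}$-algebra with basis $\{e_i: i\in V\}$ and product $e_i\cdot e_i=\sum_{k\in V}a_{ik}e_k=\sum_{k\in\mathcal{N}(i)}e_k$ and $e_i\cdot e_j=0$ for $i\neq j$. A derivation of $\mathcal{A}(G)$ is a linear map $d:\mathcal{A}(G)\to\mathcal{A}(G)$ with $d(u\cdot v)=d(u)\cdot v+u\cdot d(v)$ for all $u,v$; $\mathrm{Der}(\mathcal{A}(G))$ is the space of derivations. Two vertices $i,j$ are twins, written $i\sim_t j$, if $\mathcal{N}(i)=\mathcal{N}(j)$; this is an equivalence relation whose classes are called twin classes. $\Gamma_3(G)$ denotes the set of twin classes of $G$ having at least three vertices. *)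

theory Defs
  imports Main
begin

text \<open>Elements of the evolution algebra A(G) are coordinate vectors u :: 'v \<Rightarrow> 'k
  w.r.t. the natural basis {e_i}; e_i has coordinates (\<lambda>k. if k = i then 1 else 0).\<close>

definition simple_graph :: "('v \<Rightarrow> 'v \<Rightarrow> bool) \<Rightarrow> bool" where
  "simple_graph E \<longleftrightarrow> (\<forall>i j. E i j \<longrightarrow> E j i) \<and> (\<forall>i. \<not> E i i)"

definition connected_graph :: "('v \<Rightarrow> 'v \<Rightarrow> bool) \<Rightarrow> bool" where
  "connected_graph E \<longleftrightarrow> (\<forall>i j. E\<^sup>*\<^sup>* i j)"

definition nbrs :: "('v \<Rightarrow> 'v \<Rightarrow> bool) \<Rightarrow> 'v \<Rightarrow> 'v set" where
  "nbrs E i = {k. E i k}"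

definition twins :: "('v \<Rightarrow> 'v \<Rightarrow> bool) \<Rightarrow> 'v \<Rightarrow> 'v \<Rightarrow> bool" where
  "twins E i j \<longleftrightarrow> nbrs E i = nbrs E j"

definition twin_classes :: "('v \<Rightarrow> 'v \<Rightarrow> bool) \<Rightarrow> 'v set set" where
  "twin_classes E = {C. \<exists>i. C = {j. twins E i j}}"

definition Gamma3 :: "('v::finite \<Rightarrow> 'v \<Rightarrow> bool) \<Rightarrow> 'v set set" where
  "Gamma3 E = {C \<in> twin_classes E. card C \<ge> 3}"

text \<open>Product of A(G): e_i e_i = sum_{k} a_ik e_k, e_i e_j = 0 (i \<noteq> j), extended bilinearly.\<close>
definition evo_mult :: "('v::finite \<Rightarrow> 'v \<Rightarrow> bool) \<Rightarrow> ('v \<Rightarrow> 'k::field) \<Rightarrow> ('v \<Rightarrow> 'k) \<Rightarrow> ('v \<Rightarrow> 'k)" where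
  "evo_mult E u v = (\<lambda>k. \<Sum>i\<in>UNIV. u i * v i * (if E i k then 1 else 0))"

definition is_linear_map :: "(('v \<Rightarrow> 'k::field) \<Rightarrow> ('v \<Rightarrow> 'k)) \<Rightarrow> bool" where
  "is_linear_map d \<longleftrightarrow>
     (\<forall>u v. d (\<lambda>x. u x + v x) = (\<lambda>x. d u x + d v x)) \<and>
     (\<forall>c u. d (\<lambda>x. c * u x) = (\<lambda>x. c * d u x))"

definition is_derivation :: "('v::finite \<Rightarrow> 'v \<Rightarrow> bool) \<Rightarrow> (('v \<Rightarrow> 'k::field) \<Rightarrow> ('v \<Rightarrow> 'k)) \<Rightarrow> bool" where
  "is_derivation E d \<longleftrightarrow> is_linear_map d \<and>
     (\<forall>u v. d (evo_mult E u v) = (\<lambda>k. evo_mult E (d u) v k + evo_mult E u (d v) k))"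

end

theory Submission
imports Defs
begin

text \<open>Write \<open>d(e\<^sub>k) = \<Sum>\<^sub>j m\<^sub>j\<^sub>k e\<^sub>j\<close>. Applying \<open>d\<close> to \<open>e\<^sub>i e\<^sub>j = 0\<close> shows that \<open>m\<^sub>j\<^sub>k = 0\<close>
  unless \<open>j\<close> and \<open>k\<close> are twins, and that \<open>m\<^sub>j\<^sub>k = -m\<^sub>k\<^sub>j\<close> for distinct twins; applying
  it to \<open>e\<^sub>i\<^sup>2\<close> shows that the row sum \<open>\<Sum>\<^sub>k m\<^sub>j\<^sub>k\<close> equals \<open>2 m\<^sub>i\<^sub>i\<close> for every edge \<open>ij\<close>.
  If twin classes have at most two elements, a twin pair \<open>j, t\<close> has a common
  neighbour, so \<open>m\<^sub>j\<^sub>j = m\<^sub>t\<^sub>t\<close> and equal row sums, which forces \<open>m\<^sub>j\<^sub>t = m\<^sub>t\<^sub>j = 0\<close>.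
  Then the row sum is the diagonal entry and \<open>m\<^sub>j\<^sub>j = 2 m\<^sub>i\<^sub>i = 4 m\<^sub>j\<^sub>j\<close> along an edge.\<close>

definition basis_vec :: "'v \<Rightarrow> 'v \<Rightarrow> 'k::{zero,one}" where
  "basis_vec i = (\<lambda>k. if k = i then 1 else 0)"

lemma evo_mult_basis_vec_right:
  "evo_mult E u (basis_vec j) = (\<lambda>k. u j * (if E j k then 1 else 0))"
proof
  fix k
  have "(\<Sum>i\<in>UNIV. u i * basis_vec j i * (if E i k then 1 else 0))
      = (\<Sum>i\<in>UNIV. if i = j then u j * (if E j k then 1 else 0) else 0)"
    by (rule sum.cong) (auto simp: basis_vec_def)
  then show "evo_mult E u (basis_vec j) k = u j * (if E j k then 1 else 0)"
    unfolding evo_mult_def by simp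
qed

lemma evo_mult_commute: "evo_mult E u v = evo_mult E v u"
  unfolding evo_mult_def by (simp add: mult.commute)

lemma evo_mult_basis_vec_left:
  "evo_mult E (basis_vec j) u = (\<lambda>k. u j * (if E j k then 1 else 0))"
  by (simp add: evo_mult_commute evo_mult_basis_vec_right)

lemma is_linear_map_add: "is_linear_map d \<Longrightarrow> d (\<lambda>x. u x + v x) = (\<lambda>x. d u x + d v x)"
  unfolding is_linear_map_def by blast

lemma is_linear_map_scale: "is_linear_map d \<Longrightarrow> d (\<lambda>x. c * u x) = (\<lambda>x. c * d u x)"
  unfolding is_linear_map_def by blast

lemma is_linear_map_zero: "is_linear_map d \<Longrightarrow> d (\<lambda>x. 0) = (\<lambda>x. 0)"
  using is_linear_map_scale[of d 0] by simp

lemma is_linear_map_sum: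
  assumes "is_linear_map d" "finite A"
  shows "d (\<lambda>x. \<Sum>k\<in>A. f k x) = (\<lambda>x. \<Sum>k\<in>A. d (f k) x)"
  using assms(2)
proof (induction A rule: finite_induct)
  case empty
  then show ?case using is_linear_map_zero[OF assms(1)] by simp
next
  case (insert a A)
  then have "d (\<lambda>x. \<Sum>k\<in>insert a A. f k x) = d (\<lambda>x. f a x + (\<Sum>k\<in>A. f k x))"
    by simp
  also have "\<dots> = (\<lambda>x. d (f a) x + d (\<lambda>x. \<Sum>k\<in>A. f k x) x)"
    by (rule is_linear_map_add[OF assms(1)])
  finally show ?case using insert by simp
qed

lemma is_linear_map_eq_zeroI:
  fixes d :: "('v::finite \<Rightarrow> 'k::field) \<Rightarrow> 'v \<Rightarrow> 'k"
  assumes "is_linear_map d" and "\<And>i. d (basis_vec i) = (\<lambda>k. 0)"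
  shows "d = (\<lambda>u k. 0)"
proof
  fix u :: "'v \<Rightarrow> 'k"
  have "u = (\<lambda>x. \<Sum>i\<in>UNIV. u i * basis_vec i x)"
    by (auto simp: basis_vec_def if_distrib cong: if_cong)
  then have "d u = d (\<lambda>x. \<Sum>i\<in>UNIV. (\<lambda>x. u i * basis_vec i x) x)"
    by simp
  also have "\<dots> = (\<lambda>x. \<Sum>i\<in>UNIV. d (\<lambda>x. u i * basis_vec i x) x)"
    by (rule is_linear_map_sum[OF assms(1)]) simp
  also have "\<dots> = (\<lambda>x. 0)"
    by (simp add: is_linear_map_scale[OF assms(1)] assms(2))
  finally show "d u = (\<lambda>k. 0)" .
qed

lemma connected_graph_has_neighbour:
  fixes E :: "'v::finite \<Rightarrow> 'v \<Rightarrow> bool"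
  assumes "connected_graph E" and "2 \<le> card (UNIV :: 'v set)"
  shows "\<exists>k. E i k"
proof -
  obtain j :: 'v where "j \<noteq> i"
  proof (rule ccontr)
    assume "\<not> thesis"
    then have "UNIV = {i}" using that by blast
    then have "card (UNIV :: 'v set) = card {i}" by (rule arg_cong)
    then show False using assms(2) by simp
  qed
  moreover have "E\<^sup>*\<^sup>* i j" using assms(1) unfolding connected_graph_def by blast
  ultimately show ?thesis by (metis converse_rtranclpE)
qed

lemma twins_refl: "twins E i i"
  unfolding twins_def by simp

lemma twins_sym: "twins E i j \<Longrightarrow> twins E j i"
  unfolding twins_def by simp

lemma twins_adjacent: "twins E i j \<Longrightarrow> E i k \<Longrightarrow> E j k"
  unfolding twins_def nbrs_def by blast

lemma twin_class_eq_pair: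
  fixes E :: "'v::finite \<Rightarrow> 'v \<Rightarrow> bool"
  assumes "Gamma3 E = {}" and "twins E j t" and "t \<noteq> j"
  shows "{k. twins E j k} = {j, t}"
proof (rule ccontr)
  assume "{k. twins E j k} \<noteq> {j, t}"
  then obtain s where s: "twins E j s" "s \<noteq> j" "s \<noteq> t"
    using assms(2) twins_refl by auto
  have "{k. twins E j k} \<in> twin_classes E"
    unfolding twin_classes_def by blast
  then have "\<not> 3 \<le> card {k. twins E j k}"
    using assms(1) unfolding Gamma3_def by blast
  moreover have "{j, t, s} \<subseteq> {k. twins E j k}"
    using s assms(2) twins_refl by auto
  then have "card {j, t, s} \<le> card {k. twins E j k}"
    by (intro card_mono) simp_all
  moreover have "card {j, t, s} = 3"
    using s assms(3) by simp
  ultimately show False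
    by linarith
qed

text \<open>Here \<open>d (basis_vec k) j\<close> is the coefficient \<open>m\<^sub>j\<^sub>k\<close> of \<open>e\<^sub>j\<close> in \<open>d(e\<^sub>k)\<close>.\<close>

lemma is_derivation_linear: "is_derivation E d \<Longrightarrow> is_linear_map d"
  unfolding is_derivation_def by blast

lemma is_derivation_mult:
  "is_derivation E d \<Longrightarrow>
     d (evo_mult E u v) = (\<lambda>k. evo_mult E (d u) v k + evo_mult E u (d v) k)"
  unfolding is_derivation_def by blast

lemma derivation_basis_vec_orthogonal:
  assumes "is_derivation E d" and "i \<noteq> j"
  shows "d (basis_vec i) j * (if E j k then 1 else 0)
       + d (basis_vec j) i * (if E i k then 1 else 0) = (0::'k::field)"
proof -
  have lin: "is_linear_map d"
    using assms(1) by (rule is_derivation_linear)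
  have product: "evo_mult E (basis_vec i) (basis_vec j) = (\<lambda>k. 0::'k)"
    using assms(2) by (simp only: evo_mult_basis_vec_right) (simp add: basis_vec_def)
  have "d (evo_mult E (basis_vec i) (basis_vec j))
      = (\<lambda>k. evo_mult E (d (basis_vec i)) (basis_vec j) k
           + evo_mult E (basis_vec i) (d (basis_vec j)) k)"
    using assms(1) by (rule is_derivation_mult)
  then have "d (\<lambda>k. 0) = (\<lambda>k. evo_mult E (d (basis_vec i)) (basis_vec j) k
                              + evo_mult E (basis_vec i) (d (basis_vec j)) k)"
    unfolding product .
  then have "(\<lambda>k. 0) = (\<lambda>k. d (basis_vec i) j * (if E j k then 1 else 0)
                            + d (basis_vec j) i * (if E i k then 1 else (0::'k)))"
    by (simp add: is_linear_map_zero[OF lin] evo_mult_basis_vec_right evo_mult_basis_vec_left)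
  then show ?thesis
    by (metis (no_types, lifting))
qed

lemma derivation_basis_vec_square:
  assumes "is_derivation E d"
  shows "(\<Sum>k\<in>nbrs E i. d (basis_vec k) j)
       = 2 * d (basis_vec i) i * (if E i j then 1 else (0::'k::field))"
proof -
  have lin: "is_linear_map d"
    using assms(1) by (rule is_derivation_linear)
  have "evo_mult E (basis_vec i) (basis_vec i) = (\<lambda>x. if E i x then 1 else 0)"
    by (simp only: evo_mult_basis_vec_right) (simp add: basis_vec_def)
  also have "\<dots> = (\<lambda>x. \<Sum>k\<in>nbrs E i. basis_vec k x)"
    by (auto simp: basis_vec_def nbrs_def)
  finally have square: "evo_mult E (basis_vec i) (basis_vec i) = (\<lambda>x. \<Sum>k\<in>nbrs E i. basis_vec k x)" .
  have "d (evo_mult E (basis_vec i) (basis_vec i))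
      = (\<lambda>k. evo_mult E (d (basis_vec i)) (basis_vec i) k
           + evo_mult E (basis_vec i) (d (basis_vec i)) k)"
    using assms(1) by (rule is_derivation_mult)
  then have "d (\<lambda>x. \<Sum>k\<in>nbrs E i. basis_vec k x)
      = (\<lambda>k. evo_mult E (d (basis_vec i)) (basis_vec i) k
           + evo_mult E (basis_vec i) (d (basis_vec i)) k)"
    unfolding square .
  then have "(\<lambda>x. \<Sum>k\<in>nbrs E i. d (basis_vec k) x)
      = (\<lambda>x. 2 * d (basis_vec i) i * (if E i x then 1 else 0))"
    by (simp add: is_linear_map_sum[OF lin] evo_mult_basis_vec_right
        evo_mult_basis_vec_left mult.assoc)
  then show ?thesis
    by metis
qed

context
  fixes E :: "'v::finite \<Rightarrow> 'v \<Rightarrow> bool"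
    and d :: "('v \<Rightarrow> 'k::field) \<Rightarrow> 'v \<Rightarrow> 'k"
  assumes derivation: "is_derivation E d"
    and no_isolated: "\<And>i. \<exists>k. E i k"
begin

lemma derivation_coeff_eq_0_if_not_twins:
  assumes "\<not> twins E i j"
  shows "d (basis_vec i) j = 0"
proof -
  have ij: "i \<noteq> j" using assms by (auto simp: twins_def)
  note orth = derivation_basis_vec_orthogonal[OF derivation ij]
  obtain k where k: "E i k \<noteq> E j k"
    using assms unfolding twins_def nbrs_def by auto
  show ?thesis
  proof (cases "E j k")
    case True
    then show ?thesis using orth[of k] k by simp
  next
    case False
    then have "d (basis_vec j) i = 0" using orth[of k] k by simp
    moreover obtain k' where "E j k'" using no_isolated by blast
    ultimately show ?thesis using orth[of k'] by simp
  qed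
qed

lemma derivation_coeff_twins_antisym:
  assumes "twins E i j" and "i \<noteq> j"
  shows "d (basis_vec i) j = - d (basis_vec j) i"
proof -
  obtain k where "E i k" using no_isolated by blast
  moreover then have "E j k" using twins_adjacent[OF assms(1)] by blast
  ultimately have "d (basis_vec i) j + d (basis_vec j) i = 0"
    using derivation_basis_vec_orthogonal[OF derivation assms(2), of k] by simp
  then show ?thesis
    unfolding eq_neg_iff_add_eq_0 .
qed

lemma derivation_coeff_eq_0_outside_twin_class:
  assumes "k \<notin> {k. twins E j k}"
  shows "d (basis_vec k) j = 0"
proof (rule derivation_coeff_eq_0_if_not_twins)
  show "\<not> twins E k j" using assms twins_sym[of E k j] by blast
qed

lemma derivation_row_sum_twin_class:
  "(\<Sum>k\<in>UNIV. d (basis_vec k) j) = (\<Sum>k\<in>{k. twins E j k}. d (basis_vec k) j)"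
  using derivation_coeff_eq_0_outside_twin_class by (intro sum.mono_neutral_right) auto

lemma derivation_row_sum_edge:
  assumes "simple_graph E" and "E i j"
  shows "(\<Sum>k\<in>UNIV. d (basis_vec k) j) = 2 * d (basis_vec i) i"
proof -
  have "{k. twins E j k} \<subseteq> nbrs E i"
    using assms unfolding simple_graph_def nbrs_def twins_def by blast
  then have "(\<Sum>k\<in>nbrs E i. d (basis_vec k) j) = (\<Sum>k\<in>UNIV. d (basis_vec k) j)"
    unfolding derivation_row_sum_twin_class
    using derivation_coeff_eq_0_outside_twin_class by (intro sum.mono_neutral_right) auto
  then show ?thesis
    using derivation_basis_vec_square[OF derivation, where i=i and j=j] assms(2) by simp
qed

end

text \<open>The twins \<open>j\<close> and \<open>t\<close> share a neighbour \<open>i\<close>; the two edges at \<open>i\<close> give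
  \<open>m\<^sub>j\<^sub>j = m\<^sub>t\<^sub>t\<close> and equal row sums \<open>m\<^sub>j\<^sub>j + m\<^sub>j\<^sub>t = m\<^sub>t\<^sub>t + m\<^sub>t\<^sub>j\<close>, while \<open>m\<^sub>t\<^sub>j = -m\<^sub>j\<^sub>t\<close>.\<close>

lemma derivation_coeff_twins_eq_0:
  fixes E :: "'v::finite \<Rightarrow> 'v \<Rightarrow> bool"
    and d :: "('v \<Rightarrow> 'k::field_char_0) \<Rightarrow> 'v \<Rightarrow> 'k"
  assumes derivation: "is_derivation E d"
    and no_isolated: "\<And>i. \<exists>k. E i k"
    and "simple_graph E" and "Gamma3 E = {}" and "twins E j t" and "t \<noteq> j"
  shows "d (basis_vec t) j = 0"
proof -
  define m where "m j k = d (basis_vec k) j" for j k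
  define r where "r j = (\<Sum>k\<in>UNIV. m j k)" for j
  have edge_sym: "E a b \<Longrightarrow> E b a" for a b
    using assms(3) unfolding simple_graph_def by blast
  have row_edge: "r b = 2 * m a a" if "E a b" for a b
    using derivation_row_sum_edge[OF derivation no_isolated assms(3) that]
    unfolding r_def m_def .
  have row_pair: "r a = m a a + m a b" if "twins E a b" "b \<noteq> a" for a b
    using derivation_row_sum_twin_class[OF derivation no_isolated, of a]
      twin_class_eq_pair[OF assms(4) that]
      that(2) unfolding r_def m_def by simp
  obtain i where ji: "E j i" using no_isolated by blast
  have ti: "E t i" using twins_adjacent[OF assms(5) ji] .
  have "m j j = m t t"
    using row_edge[OF ji] row_edge[OF ti] by simp
  moreover have "r j = r t"
    using row_edge[OF edge_sym[OF ji]] row_edge[OF edge_sym[OF ti]] by simp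
  ultimately have "m j t = m t j"
    using row_pair[OF assms(5,6)] row_pair[OF twins_sym[OF assms(5)]] assms(6) by simp
  moreover have "m t j = - m j t"
    using derivation_coeff_twins_antisym[OF derivation no_isolated assms(5) not_sym[OF assms(6)]]
    unfolding m_def .
  ultimately have "m j t + m j t = 0"
    by simp
  then have "2 * m j t = 0"
    by (simp only: mult_2)
  then show ?thesis
    unfolding m_def by simp
qed

theorem theorem2p1:
  fixes E :: "'v::finite \<Rightarrow> 'v \<Rightarrow> bool"
    and d :: "('v \<Rightarrow> 'k::field_char_0) \<Rightarrow> ('v \<Rightarrow> 'k)"
  assumes "simple_graph E"
    and "connected_graph E"
    and "card (UNIV :: 'v set) \<ge> 3"
    and "is_derivation E d"
    and "Gamma3 E = {}"
  shows "d = (\<lambda>u. \<lambda>k. 0)"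
proof -
  have no_isolated: "\<exists>k. E i k" for i
    using connected_graph_has_neighbour[OF assms(2)] assms(3) by simp
  have off_diagonal: "d (basis_vec k) j = 0" if "k \<noteq> j" for j k
  proof (cases "twins E k j")
    case True
    show ?thesis
      using derivation_coeff_twins_eq_0[OF assms(4) no_isolated assms(1,5) twins_sym[OF True] that] .
  next
    case False
    then show ?thesis
      using derivation_coeff_eq_0_if_not_twins[OF assms(4) no_isolated] by blast
  qed
  have row_sum: "(\<Sum>k\<in>UNIV. d (basis_vec k) j) = d (basis_vec j) j" for j
    using off_diagonal by (subst sum.remove[of UNIV j]) auto
  have diagonal: "d (basis_vec i) i = 0" for i
  proof -
    obtain j where ij: "E i j" using no_isolated by blast
    then have ji: "E j i" using assms(1) unfolding simple_graph_def by blast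
    have "d (basis_vec j) j = 2 * d (basis_vec i) i"
      using derivation_row_sum_edge[OF assms(4) no_isolated assms(1) ij] row_sum by simp
    moreover have "d (basis_vec i) i = 2 * d (basis_vec j) j"
      using derivation_row_sum_edge[OF assms(4) no_isolated assms(1) ji] row_sum by simp
    ultimately have "d (basis_vec i) i = 4 * d (basis_vec i) i"
      by simp
    then show ?thesis
      by simp
  qed
  have "d (basis_vec k) = (\<lambda>j. 0)" for k
    using off_diagonal diagonal by (metis ext)
  then show ?thesis
    using is_linear_map_eq_zeroI[OF is_derivation_linear[OF assms(4)]] by blast
qed

end
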